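(* Let $P=P_1\times P_2$ with $P_1,P_2$ Cabanes $\ell$-groups, and let $A_i$ be the unique maximal abelian normal subgroup of $P_i$. Let $P_0$ be a normal subgroup of $P$ with $\pi_i(P_0)=P_i$ for $i=1,2$, where $\pi_i:P_1\times P_2\to P_i$ are the projections. Then $P_0$ is Cabanes, with unique maximal abelian normal subgroup $(A_1\times A_2)\cap P_0$.
   Context: An $\ell$-group is Cabanes if it has a unique maximal abelian normal subgroup. *)

theory Defs
  imports "HOL-Algebra.Algebra"
begin

definition l_group :: "('a, 'b) monoid_scheme \<Rightarrow> nat \<Rightarrow> bool" where
  "l_group G l \<longleftrightarrow> group G \<and> Factorial_Ring.prime l \<and> finite (carrier G) \<and> (\<exists>n. order G = l ^ n)"

definition abelian_subset :: "('a, 'b) monoid_scheme \<Rightarrow> 'a set \<Rightarrow> bool" where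
  "abelian_subset G A \<longleftrightarrow> (\<forall>x\<in>A. \<forall>y\<in>A. x \<otimes>\<^bsub>G\<^esub> y = y \<otimes>\<^bsub>G\<^esub> x)"

definition max_abelian_normal :: "('a, 'b) monoid_scheme \<Rightarrow> 'a set \<Rightarrow> bool" where
  "max_abelian_normal G A \<longleftrightarrow> A \<lhd> G \<and> abelian_subset G A \<and>
     (\<forall>B. B \<lhd> G \<and> abelian_subset G B \<and> A \<subseteq> B \<longrightarrow> B = A)"

definition cabanes :: "('a, 'b) monoid_scheme \<Rightarrow> bool" where
  "cabanes G \<longleftrightarrow> (\<exists>!A. max_abelian_normal G A)"

end

theory Submission
  imports Defs
begin

text \<open>The projection of an abelian normal subgroup of \<open>P\<^sub>0\<close> to \<open>P\<^sub>i\<close> is abelian and, because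
  \<open>\<pi>\<^sub>i(P\<^sub>0) = P\<^sub>i\<close>, normal in \<open>P\<^sub>i\<close>. In a finite Cabanes group every abelian normal subgroup lies in
  the unique maximal one, so it lies in \<open>A\<^sub>i\<close>. Hence every abelian normal subgroup of \<open>P\<^sub>0\<close> lies in
  \<open>(A\<^sub>1 \<times> A\<^sub>2) \<inter> P\<^sub>0\<close>, which is itself abelian and normal, so it is the greatest one.\<close>

lemma max_abelian_normal_greatest:
  assumes fin: "finite (carrier G)" and cab: "cabanes G" and A: "max_abelian_normal G A"
    and B: "B \<lhd> G" and B_ab: "abelian_subset G B"
  shows "B \<subseteq> A"
proof -
  define S where "S = {C. C \<lhd> G \<and> abelian_subset G C \<and> B \<subseteq> C}"
  have "S \<subseteq> Pow (carrier G)"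
    unfolding S_def using normal_imp_subgroup subgroup.subset by blast
  with fin have "finite S" by (meson finite_Pow_iff finite_subset)
  moreover have "B \<in> S" unfolding S_def using B B_ab by auto
  ultimately obtain C where C: "C \<in> S" "\<forall>D\<in>S. C \<subseteq> D \<longrightarrow> C = D"
    using finite_has_maximal2 by blast
  then have "max_abelian_normal G C"
    unfolding max_abelian_normal_def S_def by blast
  with cab A have "C = A" unfolding cabanes_def by blast
  with C show ?thesis unfolding S_def by blast
qed

lemma cabanes_if_greatest_abelian_normal:
  assumes A: "A \<lhd> G" "abelian_subset G A"
    and greatest: "\<And>B. B \<lhd> G \<Longrightarrow> abelian_subset G B \<Longrightarrow> B \<subseteq> A"
  shows "cabanes G" "max_abelian_normal G A"
proof -
  show max: "max_abelian_normal G A"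
    unfolding max_abelian_normal_def using A greatest by blast
  have "M = A" if "max_abelian_normal G M" for M
    using that A greatest unfolding max_abelian_normal_def by blast
  with max show "cabanes G" unfolding cabanes_def by blast
qed

lemma abelian_subset_hom_image:
  assumes f: "f \<in> hom H G" and B: "B \<subseteq> carrier H" "abelian_subset H B"
  shows "abelian_subset G (f ` B)"
  unfolding abelian_subset_def
proof (intro ballI)
  fix x y assume "x \<in> f ` B" "y \<in> f ` B"
  then obtain a b where ab: "a \<in> B" "b \<in> B" and xy: "x = f a" "y = f b" by blast
  with B(1) have carr: "a \<in> carrier H" "b \<in> carrier H" by auto
  have "x \<otimes>\<^bsub>G\<^esub> y = f (a \<otimes>\<^bsub>H\<^esub> b)" using f carr xy by (simp add: hom_mult)
  also have "\<dots> = f (b \<otimes>\<^bsub>H\<^esub> a)" using B(2) ab unfolding abelian_subset_def by simp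
  also have "\<dots> = y \<otimes>\<^bsub>G\<^esub> x" using f carr xy by (simp add: hom_mult)
  finally show "x \<otimes>\<^bsub>G\<^esub> y = y \<otimes>\<^bsub>G\<^esub> x" .
qed

lemma abelian_normal_surj_hom_image:
  assumes "group G" "group H" "f \<in> hom H G" "f ` carrier H = carrier G"
    and B: "B \<lhd> H" "abelian_subset H B"
  shows "f ` B \<lhd> G" "abelian_subset G (f ` B)"
proof -
  have "group_hom H G f"
    using assms(1-3) by (simp add: group_hom_def group_hom_axioms_def)
  with assms(4) B show "f ` B \<lhd> G" using normal.surj_hom_normal_subgroup by blast
  from B(1) have "B \<subseteq> carrier H" using normal_imp_subgroup subgroup.subset by blast
  from abelian_subset_hom_image[OF assms(3) this B(2)] show "abelian_subset G (f ` B)" .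
qed

lemma fst_hom_DirProd_subgroup:
  assumes "P0 \<subseteq> carrier (G1 \<times>\<times> G2)"
  shows "fst \<in> hom ((G1 \<times>\<times> G2)\<lparr>carrier := P0\<rparr>) G1"
  using assms unfolding hom_def by (auto simp: mult_DirProd')

lemma snd_hom_DirProd_subgroup:
  assumes "P0 \<subseteq> carrier (G1 \<times>\<times> G2)"
  shows "snd \<in> hom ((G1 \<times>\<times> G2)\<lparr>carrier := P0\<rparr>) G2"
  using assms unfolding hom_def by (auto simp: mult_DirProd')

lemma abelian_subset_Times:
  assumes "abelian_subset G1 A1" "abelian_subset G2 A2"
  shows "abelian_subset ((G1 \<times>\<times> G2)\<lparr>carrier := P0\<rparr>) (A1 \<times> A2 \<inter> P0)"
  using assms unfolding abelian_subset_def by (auto simp: mult_DirProd')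

lemma cabanes_subdirect_product:
  assumes G: "group G1" "group G2" "finite (carrier G1)" "finite (carrier G2)"
    and cab: "cabanes G1" "cabanes G2"
    and A: "max_abelian_normal G1 A1" "max_abelian_normal G2 A2"
    and P0: "P0 \<lhd> G1 \<times>\<times> G2" "fst ` P0 = carrier G1" "snd ` P0 = carrier G2"
  shows "cabanes ((G1 \<times>\<times> G2)\<lparr>carrier := P0\<rparr>)"
    and "max_abelian_normal ((G1 \<times>\<times> G2)\<lparr>carrier := P0\<rparr>) (A1 \<times> A2 \<inter> P0)"
proof -
  define H where "H = (G1 \<times>\<times> G2)\<lparr>carrier := P0\<rparr>"
  have prod: "group (G1 \<times>\<times> G2)" using DirProd_group G(1,2) .
  have sub: "subgroup P0 (G1 \<times>\<times> G2)" using P0(1) normal_imp_subgroup by blast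
  have H: "group H" unfolding H_def using subgroup.subgroup_is_group[OF sub prod] .
  have "fst \<in> hom H G1" "snd \<in> hom H G2"
    unfolding H_def using subgroup.subset[OF sub]
    by (rule fst_hom_DirProd_subgroup, rule snd_hom_DirProd_subgroup)
  note proj = abelian_normal_surj_hom_image[OF G(1) H this(1)]
    abelian_normal_surj_hom_image[OF G(2) H this(2)]
  have A_normal: "A1 \<lhd> G1" "A2 \<lhd> G2" and A_ab: "abelian_subset G1 A1" "abelian_subset G2 A2"
    using A unfolding max_abelian_normal_def by auto
  have "A1 \<times> A2 \<inter> P0 \<lhd> H"
    unfolding H_def using group.normal_Int_subgroup[OF prod sub group.DirProd_normal[OF G(1,2) A_normal]] .
  moreover have "abelian_subset H (A1 \<times> A2 \<inter> P0)"
    unfolding H_def using abelian_subset_Times[OF A_ab] .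
  moreover have "B \<subseteq> A1 \<times> A2 \<inter> P0" if B: "B \<lhd> H" "abelian_subset H B" for B
  proof -
    have "B \<subseteq> P0" using B(1) normal_imp_subgroup subgroup.subset unfolding H_def by fastforce
    moreover have "fst ` B \<subseteq> A1"
      using max_abelian_normal_greatest[OF G(3) cab(1) A(1)] proj(1,2) B P0(2) by (simp add: H_def)
    moreover have "snd ` B \<subseteq> A2"
      using max_abelian_normal_greatest[OF G(4) cab(2) A(2)] proj(3,4) B P0(3) by (simp add: H_def)
    ultimately show ?thesis by fastforce
  qed
  ultimately show "cabanes H" "max_abelian_normal H (A1 \<times> A2 \<inter> P0)"
    using cabanes_if_greatest_abelian_normal by blast+
qed

theorem mainTheorem16:
  fixes P1 :: "('a, 'c) monoid_scheme" and P2 :: "('b, 'd) monoid_scheme"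
    and l :: nat and A1 :: "'a set" and A2 :: "'b set" and P0 :: "('a \<times> 'b) set"
  assumes "l_group P1 l" and "l_group P2 l"
    and "cabanes P1" and "cabanes P2"
    and "max_abelian_normal P1 A1" and "max_abelian_normal P2 A2"
    and "P0 \<lhd> (P1 \<times>\<times> P2)"
    and "fst ` P0 = carrier P1" and "snd ` P0 = carrier P2"
  shows "cabanes ((P1 \<times>\<times> P2)\<lparr>carrier := P0\<rparr>)
    \<and> max_abelian_normal ((P1 \<times>\<times> P2)\<lparr>carrier := P0\<rparr>) ((A1 \<times> A2) \<inter> P0)"
proof -
  have "group P1" "group P2" "finite (carrier P1)" "finite (carrier P2)"
    using assms(1,2) unfolding l_group_def by auto
  from cabanes_subdirect_product[OF this assms(3-9)] show ?thesis by blast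
qed

end
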